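(* For any quantum seed $(X,\mathbf h,\Lambda,\widetilde B)$, $$\mathcal U(X,\mathbf h,\Lambda,\widetilde B)=\bigcap_{i=1}^n\mathbb{ZP}[X_1^{\pm1},\dots,X_{i-1}^{\pm1},X_i,X'_i,X_{i+1}^{\pm1},\dots,X_n^{\pm1}],$$ where $X'_i$ is the $i$-th cluster variable of $\mu_i(X,\mathbf h,\Lambda,\widetilde B)$.
   Context: Notation: $[a,b]=\{a,a+1,\dots,b\}$; $[x]_+=\max(x,0)$, applied entrywise to vectors; $e_1,\dots,e_m$ is the standard basis of $\mathbb Z^m$. Fix integers $m\ge n\ge 1$. A compatible pair $(\Lambda,\widetilde B)$ consists of an $m\times n$ integer matrix $\widetilde B=(b_{kl})$ and a skew-symmetric $m\times m$ integer matrix $\Lambda$ such that $\Lambda\widetilde B=-\begin{bmatrix}D\\0\end{bmatrix}$ for some $D=\mathrm{diag}(\tilde d_1,\dots,\tilde d_n)$ with all $\tilde d_k\in\mathbb Z_{>0}$. Write $\Lambda(a,b)=a^T\Lambda b$. Fix positive integers $d_1,\dots,d_n$ such that $d_k$ divides every entry of the $k$-th column $b^k$ of $\widetilde B$ (preserved under mutation); $\beta^k=\frac1{d_k}b^k$. The quantum torus $\mathcal T(\Lambda)$ is the $\mathbb Z[q^{\pm1/2}]$-algebra with basis $\{X(c)\mid c\in\mathbb Z^m\}$ and multiplication $X(c)X(d)=q^{\frac12\Lambda(c,d)}X(c+d)$; $\mathcal F$ is its skew field of fractions, $X_k=X(e_k)$. For $k\in[1,n]$, $\mathbf h_k=(h_{k,0},\dots,h_{k,d_k})$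 with $h_{k,r}\in\mathbb Z[q^{\pm1/2}]$, $h_{k,r}=h_{k,d_k-r}$, $h_{k,0}=h_{k,d_k}=1$. A quantum seed $(X,\mathbf h,\Lambda,\widetilde B)$ consists of a compatible pair, $\mathbf h$, and a map $X:\mathbb Z^m\to\mathcal F$ with $X(c)X(d)=q^{\frac12\Lambda(c,d)}X(c+d)$. Mutation in direction $i$: $\mu_i(X,\mathbf h,\Lambda,\widetilde B)=(X',\mathbf h,E^T\Lambda E,E\widetilde BF)$ where $E_{kl}=\delta_{kl}$ ($l\neq i$), $E_{ii}=-1$, $E_{ki}=[-\varepsilon b_{ki}]_+$ ($k\ne i$), $F_{kl}=\delta_{kl}$ ($k\ne i$), $F_{ii}=-1$, $F_{il}=[\varepsilon b_{il}]_+$ ($l\ne i$), $\varepsilon\in\{\pm1\}$ arbitrary, and $X'$ is determined by $X'(e_k)=X(e_k)$ ($k\ne i$) and $X'(e_i)=\sum_{r=0}^{d_i}h_{i,r}X(r[\beta^i]_++(d_i-r)[-\beta^i]_+-e_i)$; write $X'_k=X'(e_k)$. $\mathbb{ZP}$ is the ring of Laurent polynomials in $X_{n+1},\dots,X_m$ with coefficients in $\mathbb Z[q^{\pm1/2}]$; for $Y_1,\dots,Y_s\in\mathcal F$, $\mathbb{ZP}[Y_1,\dots,Y_s]$ is the subring of $\mathcal F$ generated by $\mathbb{ZP}$ and the $Y_k$ (exponent $\pm1$ means both $Y$ and $Y^{-1}$ are adjoined). For a seed $\Sigma=(X,\mathbf h,\Lambda,\widetilde B)$ let $\mathbb L(\Sigma)=\mathbb{ZP}[X_1^{\pm1},\dots,X_n^{\pm1}]$;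 the upper bound is $\mathcal U(\Sigma)=\mathbb L(\Sigma)\cap\bigcap_{i=1}^n\mathbb L(\mu_i(\Sigma))$. *)

theory Defs
  imports Main
begin

text \<open>Integer vectors in Z^m are modelled as functions nat => int supported on [1,m].
  Matrices are functions nat => nat => int (row index, column index), 1-based.\<close>

definition lattice :: "nat \<Rightarrow> (nat \<Rightarrow> int) set" where
  "lattice m = {c. \<forall>k. c k \<noteq> 0 \<longrightarrow> k \<in> {1..m}}"

definition unitvec :: "nat \<Rightarrow> nat \<Rightarrow> int" ("\<ee>") where
  "unitvec i = (\<lambda>j. if j = i then 1 else 0)"

definition posp :: "(nat \<Rightarrow> int) \<Rightarrow> nat \<Rightarrow> int" where
  "posp c = (\<lambda>k. max (c k) 0)"

definition bilin :: "nat \<Rightarrow> (nat \<Rightarrow> nat \<Rightarrow> int) \<Rightarrow> (nat \<Rightarrow> int) \<Rightarrow> (nat \<Rightarrow> int) \<Rightarrow> int" where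
  "bilin m L a b = (\<Sum>k\<in>{1..m}. \<Sum>l\<in>{1..m}. a k * L k l * b l)"

definition skew_symmetric :: "nat \<Rightarrow> (nat \<Rightarrow> nat \<Rightarrow> int) \<Rightarrow> bool" where
  "skew_symmetric m L \<longleftrightarrow> (\<forall>k\<in>{1..m}. \<forall>l\<in>{1..m}. L k l = - L l k)"

definition compatible_pair ::
  "nat \<Rightarrow> nat \<Rightarrow> (nat \<Rightarrow> nat \<Rightarrow> int) \<Rightarrow> (nat \<Rightarrow> nat \<Rightarrow> int) \<Rightarrow> bool" where
  "compatible_pair m n L B \<longleftrightarrow> skew_symmetric m L \<and>
     (\<exists>D :: nat \<Rightarrow> int. (\<forall>l\<in>{1..n}. D l > 0) \<and>
        (\<forall>k\<in>{1..m}. \<forall>l\<in>{1..n}.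
            (\<Sum>j\<in>{1..m}. L k j * B j l) = (if k = l then - D l else 0)))"

definition beta :: "nat \<Rightarrow> (nat \<Rightarrow> nat \<Rightarrow> int) \<Rightarrow> (nat \<Rightarrow> nat) \<Rightarrow> nat \<Rightarrow> nat \<Rightarrow> int" where
  "beta m B d k = (\<lambda>j. if j \<in> {1..m} then B j k div int (d k) else 0)"

text \<open>The ring Z[q^{+-1/2}] realised inside the ambient division ring, with t = q^{1/2}.\<close>
definition laurent_coeffs :: "'f::division_ring \<Rightarrow> 'f set" where
  "laurent_coeffs t = {\<Sum>j\<in>J. of_int (a j) * t powi j | J a. finite J}"

text \<open>The Z[q^{+-1/2}]-span of a toric frame X (the image of the quantum torus).\<close>
definition torus_span :: "nat \<Rightarrow> 'f::division_ring \<Rightarrow> ((nat \<Rightarrow> int) \<Rightarrow> 'f) \<Rightarrow> 'f set" where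
  "torus_span m t X = {\<Sum>p\<in>S. of_int (a p) * t powi (snd p) * X (fst p) | S a.
       finite S \<and> S \<subseteq> lattice m \<times> UNIV}"

text \<open>A quantum seed (X, h, Lambda, Btilde) in the skew field F (a division ring), where
  t is q^{1/2}, which is central, and X is a toric frame: it satisfies the quasi-commutation
  rule, the elements t^j X(c) are Z-linearly independent (so X embeds the quantum torus
  T(Lambda) over Z[q^{+-1/2}], q an indeterminate) and F is the skew field of fractions
  of that quantum torus.  d fixes the positive integers d_k dividing the k-th column.\<close>
definition quantum_seed ::
  "nat \<Rightarrow> nat \<Rightarrow> 'f::division_ring \<Rightarrow> ((nat \<Rightarrow> int) \<Rightarrow> 'f) \<Rightarrow> (nat \<Rightarrow> nat \<Rightarrow> 'f) \<Rightarrow> (nat \<Rightarrow> nat)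
     \<Rightarrow> (nat \<Rightarrow> nat \<Rightarrow> int) \<Rightarrow> (nat \<Rightarrow> nat \<Rightarrow> int) \<Rightarrow> bool" where
  "quantum_seed m n t X h d L B \<longleftrightarrow>
     1 \<le> n \<and> n \<le> m \<and>
     compatible_pair m n L B \<and>
     (\<forall>k\<in>{1..n}. d k > 0 \<and> (\<forall>j\<in>{1..m}. int (d k) dvd B j k)) \<and>
     (\<forall>k\<in>{1..n}. (\<forall>r\<le>d k. h k r \<in> laurent_coeffs t \<and> h k r = h k (d k - r))
                     \<and> h k 0 = 1 \<and> h k (d k) = 1) \<and>
     (\<forall>x. t * x = x * t) \<and>
     (\<forall>c\<in>lattice m. \<forall>c'\<in>lattice m. X c * X c' = t powi (bilin m L c c') * X (\<lambda>k. c k + c' k)) \<and>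
     (\<forall>S a. finite S \<longrightarrow> S \<subseteq> lattice m \<times> UNIV \<longrightarrow>
         (\<Sum>p\<in>S. of_int (a p) * t powi (snd p) * X (fst p)) = 0 \<longrightarrow> (\<forall>p\<in>S. a p = 0)) \<and>
     (\<forall>y. \<exists>u\<in>torus_span m t X. \<exists>v\<in>torus_span m t X. v \<noteq> 0 \<and> y = u * inverse v)"

inductive_set subring_gen :: "'a::ring_1 set \<Rightarrow> 'a set" for S :: "'a set" where
  gen: "x \<in> S \<Longrightarrow> x \<in> subring_gen S"
| one: "1 \<in> subring_gen S"
| diff: "x \<in> subring_gen S \<Longrightarrow> y \<in> subring_gen S \<Longrightarrow> x - y \<in> subring_gen S"
| mult: "x \<in> subring_gen S \<Longrightarrow> y \<in> subring_gen S \<Longrightarrow> x * y \<in> subring_gen S"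

text \<open>Generators of ZP: scalars q^{+-1/2} and the frozen variables X_{n+1..m} with inverses.\<close>
definition ZP_gens :: "nat \<Rightarrow> nat \<Rightarrow> 'f::division_ring \<Rightarrow> ((nat \<Rightarrow> int) \<Rightarrow> 'f) \<Rightarrow> 'f set" where
  "ZP_gens m n t X = {t, inverse t} \<union> (\<Union>k\<in>{n+1..m}. {X (\<ee> k), inverse (X (\<ee> k))})"

definition mutated_var ::
  "nat \<Rightarrow> ((nat \<Rightarrow> int) \<Rightarrow> 'f::division_ring) \<Rightarrow> (nat \<Rightarrow> nat \<Rightarrow> 'f) \<Rightarrow> (nat \<Rightarrow> nat)
     \<Rightarrow> (nat \<Rightarrow> nat \<Rightarrow> int) \<Rightarrow> nat \<Rightarrow> 'f" where
  "mutated_var m X h d B i =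
     (\<Sum>r\<in>{0..d i}. h i r *
        X (\<lambda>j. int r * posp (beta m B d i) j
               + int (d i - r) * posp (\<lambda>l. - beta m B d i l) j - \<ee> i j))"

definition L_ring :: "nat \<Rightarrow> nat \<Rightarrow> 'f::division_ring \<Rightarrow> ((nat \<Rightarrow> int) \<Rightarrow> 'f) \<Rightarrow> 'f set" where
  "L_ring m n t X = subring_gen (ZP_gens m n t X \<union>
      (\<Union>k\<in>{1..n}. {X (\<ee> k), inverse (X (\<ee> k))}))"

definition L_mut_ring ::
  "nat \<Rightarrow> nat \<Rightarrow> 'f::division_ring \<Rightarrow> ((nat \<Rightarrow> int) \<Rightarrow> 'f) \<Rightarrow> (nat \<Rightarrow> nat \<Rightarrow> 'f) \<Rightarrow> (nat \<Rightarrow> nat)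
     \<Rightarrow> (nat \<Rightarrow> nat \<Rightarrow> int) \<Rightarrow> nat \<Rightarrow> 'f set" where
  "L_mut_ring m n t X h d B i = subring_gen (ZP_gens m n t X \<union>
      (\<Union>k\<in>{1..n} - {i}. {X (\<ee> k), inverse (X (\<ee> k))}) \<union>
      {mutated_var m X h d B i, inverse (mutated_var m X h d B i)})"

definition upper_bound ::
  "nat \<Rightarrow> nat \<Rightarrow> 'f::division_ring \<Rightarrow> ((nat \<Rightarrow> int) \<Rightarrow> 'f) \<Rightarrow> (nat \<Rightarrow> nat \<Rightarrow> 'f) \<Rightarrow> (nat \<Rightarrow> nat)
     \<Rightarrow> (nat \<Rightarrow> nat \<Rightarrow> int) \<Rightarrow> 'f set" where
  "upper_bound m n t X h d B = L_ring m n t X \<inter> (\<Inter>i\<in>{1..n}. L_mut_ring m n t X h d B i)"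

end

theory Submission
  imports Defs
begin

text \<open>
  Fix \<open>i\<close> and let \<open>R\<close> be the subring generated by \<open>\<int>\<P>\<close> and the \<open>X\<^sub>k\<^sup>\<plusminus>\<^sup>1\<close>, \<open>k \<noteq> i\<close>.
  Both \<open>X\<^sub>i\<close> and \<open>X'\<^sub>i\<close> quasi-commute with the generators of \<open>R\<close> (for \<open>X'\<^sub>i\<close> this is
  where compatibility of \<open>(\<Lambda>, B)\<close> enters), so every element of \<open>\<L>(\<Sigma>)\<close> is a finite sum
  \<open>\<Sum>\<^sub>a r\<^sub>a X\<^sub>i\<^sup>a\<close> and every element of \<open>\<L>(\<mu>\<^sub>i\<Sigma>)\<close> a finite sum \<open>\<Sum>\<^sub>b r\<^sub>b X'\<^sub>i\<^sup>b\<close>,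
  with \<open>r\<^sub>a, r\<^sub>b \<in> R\<close>.  Grade the quantum torus by the exponent of \<open>X\<^sub>i\<close>: \<open>R\<close> lives in degree
  \<open>0\<close>, \<open>X\<^sub>i\<close> has degree \<open>1\<close> and \<open>X'\<^sub>i\<close> is homogeneous of degree \<open>-1\<close>.

  Given \<open>y\<close> in both rings, write \<open>y = p + z\<close> where \<open>p\<close> collects the terms \<open>r\<^sub>b X'\<^sub>i\<^sup>b\<close> with
  \<open>b \<ge> 0\<close>.  Then \<open>p \<in> A\<^sub>i = \<int>\<P>[\<dots>, X\<^sub>i, X'\<^sub>i, \<dots>] \<subseteq> \<L>(\<Sigma>)\<close>, so \<open>z = y - p\<close> is some
  \<open>\<Sum>\<^sub>a e\<^sub>a X\<^sub>i\<^sup>a\<close>.  For large \<open>N\<close> all degrees of \<open>z X'\<^sub>i\<^sup>N\<close> are \<open>> -N\<close>, whereas the terms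
  with \<open>a \<le> 0\<close> contribute only degrees \<open>\<le> -N\<close>; by linear independence of the monomials
  they vanish, so \<open>z \<in> A\<^sub>i\<close>.  Conversely \<open>A\<^sub>i \<subseteq> \<L>(\<Sigma>)\<close> since \<open>X'\<^sub>i\<close> is a Laurent polynomial in
  the \<open>X\<^sub>k\<close>, and \<open>A\<^sub>i \<subseteq> \<L>(\<mu>\<^sub>i\<Sigma>)\<close> since \<open>X\<^sub>i X'\<^sub>i\<close> does not involve \<open>X\<^sub>i\<close>.
\<close>

lemma subring_gen_zero: "0 \<in> subring_gen S"
  using subring_gen.diff[OF subring_gen.one subring_gen.one] by simp

lemma subring_gen_uminus: "x \<in> subring_gen S \<Longrightarrow> - x \<in> subring_gen S"
  using subring_gen.diff[OF subring_gen_zero] by fastforce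

lemma subring_gen_add: "x \<in> subring_gen S \<Longrightarrow> y \<in> subring_gen S \<Longrightarrow> x + y \<in> subring_gen S"
  using subring_gen.diff[OF _ subring_gen_uminus] by fastforce

lemma subring_gen_sum:
  "(\<And>a. a \<in> F \<Longrightarrow> g a \<in> subring_gen S) \<Longrightarrow> (\<Sum>a\<in>F. g a) \<in> subring_gen S"
  by (induction F rule: infinite_finite_induct) (auto intro: subring_gen_zero subring_gen_add)

lemma subring_gen_power: "x \<in> subring_gen S \<Longrightarrow> x ^ k \<in> subring_gen S"
  by (induction k) (auto intro: subring_gen.one subring_gen.mult)

lemma subring_gen_of_nat: "of_nat k \<in> subring_gen S"
  by (induction k) (auto intro: subring_gen.one subring_gen_zero subring_gen_add)

lemma subring_gen_of_int: "of_int k \<in> subring_gen S"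
  by (cases k rule: int_cases2) (auto intro: subring_gen_of_nat subring_gen_uminus)

lemma subring_gen_least:
  assumes "S \<subseteq> R" "1 \<in> R" "\<And>x y. x \<in> R \<Longrightarrow> y \<in> R \<Longrightarrow> x - y \<in> R"
    "\<And>x y. x \<in> R \<Longrightarrow> y \<in> R \<Longrightarrow> x * y \<in> R"
  shows "subring_gen S \<subseteq> R"
proof
  fix x assume "x \<in> subring_gen S" then show "x \<in> R"
    by (induction rule: subring_gen.induct) (use assms in auto)
qed

lemma subring_gen_subset: "S \<subseteq> subring_gen S' \<Longrightarrow> subring_gen S \<subseteq> subring_gen S'"
  by (rule subring_gen_least) (auto intro: subring_gen.intros)

lemma subring_gen_mono: "S \<subseteq> S' \<Longrightarrow> subring_gen S \<subseteq> subring_gen S'"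
  by (rule subring_gen_subset) (auto intro: subring_gen.gen)

lemma subring_gen_sum_nonneg_powers:
  assumes "Y \<in> subring_gen S" "\<And>b. b \<in> F \<Longrightarrow> 0 \<le> b \<and> c b \<in> subring_gen S"
  shows "(\<Sum>b\<in>F. c b * Y powi b) \<in> subring_gen S"
proof (rule subring_gen_sum)
  fix b assume "b \<in> F"
  then show "c b * Y powi b \<in> subring_gen S"
    using assms by (auto simp: power_int_def intro: subring_gen.mult subring_gen_power)
qed

lemma subring_gen_conj_closed:
  fixes Y :: "'f::division_ring"
  assumes "Y \<noteq> 0" "\<And>x. x \<in> S \<Longrightarrow> Y * x * inverse Y \<in> subring_gen S"
  shows "x \<in> subring_gen S \<Longrightarrow> Y * x * inverse Y \<in> subring_gen S"
proof (induction rule: subring_gen.induct)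
  case (mult x y)
  have "Y * (x * y) * inverse Y = (Y * x * inverse Y) * (Y * y * inverse Y)"
    using assms(1) by (simp add: mult.assoc flip: mult.assoc[of "inverse Y" Y])
  then show ?case using mult.IH by (simp add: subring_gen.mult)
qed (use assms in \<open>auto simp: algebra_simps intro: subring_gen.intros\<close>)

section \<open>Laurent expansions over a subring normalized by a unit\<close>

definition laurent_span :: "'f::division_ring set \<Rightarrow> 'f \<Rightarrow> 'f set" where
  "laurent_span R Y = {\<Sum>b\<in>F. c b * Y powi b | F c. finite F \<and> (\<forall>b\<in>F. c b \<in> R)}"

lemma conj_power_closed:
  fixes Y :: "'f::division_ring"
  assumes "Y \<noteq> 0" "\<And>x. x \<in> R \<Longrightarrow> Y * x * inverse Y \<in> R"
  shows "x \<in> R \<Longrightarrow> Y ^ k * x * inverse (Y ^ k) \<in> R"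
proof (induction k arbitrary: x)
  case (Suc k)
  have "Y ^ Suc k * x * inverse (Y ^ Suc k) = Y * (Y ^ k * x * inverse (Y ^ k)) * inverse Y"
    using assms(1) by (simp add: nonzero_inverse_mult_distrib mult.assoc power_commutes)
  then show ?case using Suc assms by simp
qed simp

lemma conj_power_int_closed:
  fixes Y :: "'f::division_ring"
  assumes "Y \<noteq> 0" "\<And>x. x \<in> R \<Longrightarrow> Y * x * inverse Y \<in> R"
    "\<And>x. x \<in> R \<Longrightarrow> inverse Y * x * Y \<in> R" "x \<in> R"
  shows "Y powi b * x * inverse (Y powi b) \<in> R"
proof (cases "b \<ge> 0")
  case True
  then show ?thesis using conj_power_closed[OF assms(1,2,4)] by (simp add: power_int_def)
next
  case False
  have "inverse Y ^ k * x * inverse (inverse Y ^ k) \<in> R" for k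
    by (rule conj_power_closed[OF _ _ assms(4)]) (use assms in auto)
  then show ?thesis using False by (simp add: power_int_def)
qed

locale normalized_subring =
  fixes R :: "'f::division_ring set" and Y :: 'f
  assumes nonzero: "Y \<noteq> 0"
    and one_mem: "1 \<in> R"
    and diff_mem: "\<And>x y. x \<in> R \<Longrightarrow> y \<in> R \<Longrightarrow> x - y \<in> R"
    and mult_mem: "\<And>x y. x \<in> R \<Longrightarrow> y \<in> R \<Longrightarrow> x * y \<in> R"
    and conj_mem: "\<And>x. x \<in> R \<Longrightarrow> Y * x * inverse Y \<in> R"
    and conj_inverse_mem: "\<And>x. x \<in> R \<Longrightarrow> inverse Y * x * Y \<in> R"
begin

lemma zero_mem: "0 \<in> R"
  using diff_mem[OF one_mem one_mem] by simp

lemma add_mem: "x \<in> R \<Longrightarrow> y \<in> R \<Longrightarrow> x + y \<in> R"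
  using diff_mem[OF _ diff_mem[OF zero_mem]] by fastforce

lemma uminus_mem: "x \<in> R \<Longrightarrow> - x \<in> R"
  using diff_mem[OF zero_mem] by fastforce

lemma laurent_spanI:
  "finite F \<Longrightarrow> (\<And>b. b \<in> F \<Longrightarrow> c b \<in> R) \<Longrightarrow> (\<Sum>b\<in>F. c b * Y powi b) \<in> laurent_span R Y"
  unfolding laurent_span_def by blast

lemma laurent_span_monomial: "c \<in> R \<Longrightarrow> c * Y powi b \<in> laurent_span R Y"
  using laurent_spanI[of "{b}" "\<lambda>_. c"] by simp

lemma laurent_span_zero: "0 \<in> laurent_span R Y"
  using laurent_spanI[of "{}"] by simp

lemma laurent_span_add:
  assumes "x \<in> laurent_span R Y" "y \<in> laurent_span R Y"
  shows "x + y \<in> laurent_span R Y"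
proof -
  obtain F1 c1 where 1: "x = (\<Sum>b\<in>F1. c1 b * Y powi b)" "finite F1" "\<forall>b\<in>F1. c1 b \<in> R"
    using assms(1) unfolding laurent_span_def by blast
  obtain F2 c2 where 2: "y = (\<Sum>b\<in>F2. c2 b * Y powi b)" "finite F2" "\<forall>b\<in>F2. c2 b \<in> R"
    using assms(2) unfolding laurent_span_def by blast
  define c where "c b = (if b \<in> F1 then c1 b else 0) + (if b \<in> F2 then c2 b else 0)" for b
  have "x + y = (\<Sum>b\<in>F1 \<union> F2. (if b \<in> F1 then c1 b * Y powi b else 0))
      + (\<Sum>b\<in>F1 \<union> F2. (if b \<in> F2 then c2 b * Y powi b else 0))"
    using 1 2 by (simp add: sum.If_cases Int_absorb1 Int_absorb2)
  also have "\<dots> = (\<Sum>b\<in>F1 \<union> F2. c b * Y powi b)"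
    by (subst sum.distrib[symmetric], intro sum.cong refl) (auto simp: c_def distrib_right)
  also have "\<dots> \<in> laurent_span R Y"
    using 1 2 by (intro laurent_spanI) (auto simp: c_def intro: add_mem zero_mem)
  finally show ?thesis .
qed

lemma laurent_span_sum:
  "(\<And>a. a \<in> F \<Longrightarrow> g a \<in> laurent_span R Y) \<Longrightarrow> (\<Sum>a\<in>F. g a) \<in> laurent_span R Y"
  by (induction F rule: infinite_finite_induct) (auto intro: laurent_span_zero laurent_span_add)

lemma laurent_span_uminus:
  assumes "x \<in> laurent_span R Y" shows "- x \<in> laurent_span R Y"
proof -
  obtain F c where x: "x = (\<Sum>b\<in>F. c b * Y powi b)" "finite F" "\<forall>b\<in>F. c b \<in> R"
    using assms unfolding laurent_span_def by blast
  have "- x = (\<Sum>b\<in>F. (- c b) * Y powi b)" by (simp add: x sum_negf)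
  also have "\<dots> \<in> laurent_span R Y" using x by (intro laurent_spanI) (auto intro: uminus_mem)
  finally show ?thesis .
qed

text \<open>Moving a coefficient past a power of \<open>Y\<close> conjugates it, which keeps it in \<open>R\<close>.\<close>

lemma laurent_span_monomial_mult:
  assumes "c \<in> R" "c' \<in> R"
  shows "(c * Y powi b) * (c' * Y powi b') \<in> laurent_span R Y"
proof -
  have "(c * Y powi b) * (c' * Y powi b')
      = (c * (Y powi b * c' * inverse (Y powi b))) * (Y powi b * Y powi b')"
  proof -
    have "inverse (Y powi b) * (Y powi b * z) = z" for z
      using nonzero by (simp flip: mult.assoc)
    then show ?thesis by (simp add: mult.assoc)
  qed
  also have "\<dots> = (c * (Y powi b * c' * inverse (Y powi b))) * Y powi (b + b')"
    using nonzero by (simp add: power_int_add)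
  also have "\<dots> \<in> laurent_span R Y"
    by (intro laurent_span_monomial conj_power_int_closed[OF nonzero conj_mem conj_inverse_mem assms(2)]
        mult_mem assms(1))
  finally show ?thesis .
qed

lemma laurent_span_mult:
  assumes "x \<in> laurent_span R Y" "y \<in> laurent_span R Y"
  shows "x * y \<in> laurent_span R Y"
proof -
  obtain F1 c1 where 1: "x = (\<Sum>b\<in>F1. c1 b * Y powi b)" "\<forall>b\<in>F1. c1 b \<in> R"
    using assms(1) unfolding laurent_span_def by blast
  obtain F2 c2 where 2: "y = (\<Sum>b\<in>F2. c2 b * Y powi b)" "\<forall>b\<in>F2. c2 b \<in> R"
    using assms(2) unfolding laurent_span_def by blast
  have "x * y = (\<Sum>b'\<in>F2. \<Sum>b\<in>F1. (c1 b * Y powi b) * (c2 b' * Y powi b'))"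
    by (simp add: 1(1) 2(1) sum_distrib_left sum_distrib_right)
  also have "\<dots> \<in> laurent_span R Y"
    using 1 2 by (intro laurent_span_sum laurent_span_monomial_mult) auto
  finally show ?thesis .
qed

lemma subring_gen_adjoin_subset_laurent_span:
  assumes "S \<subseteq> R"
  shows "subring_gen (S \<union> {Y, inverse Y}) \<subseteq> laurent_span R Y"
proof (rule subring_gen_least)
  have "c \<in> laurent_span R Y" if "c \<in> S" for c
    using laurent_span_monomial[of c 0] that assms by auto
  moreover have "Y \<in> laurent_span R Y" "inverse Y \<in> laurent_span R Y"
    using laurent_span_monomial[OF one_mem, of 1] laurent_span_monomial[OF one_mem, of "-1"] by simp_all
  ultimately show "S \<union> {Y, inverse Y} \<subseteq> laurent_span R Y" by auto
  show "1 \<in> laurent_span R Y" using laurent_span_monomial[OF one_mem, of 0] by simp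
  show "x - y \<in> laurent_span R Y" if "x \<in> laurent_span R Y" "y \<in> laurent_span R Y" for x y
    using laurent_span_add[OF that(1) laurent_span_uminus[OF that(2)]] by simp
qed (rule laurent_span_mult)

end

section \<open>The quantum torus of a seed\<close>

lemma of_int_mult_mult_of_int_mult:
  "of_int a * x * (of_int b * y) = of_int (a * b) * (x * (y :: 'a::ring_1))"
proof -
  have "of_int a * x * (of_int b * y) = of_int a * (x * of_int b) * y" by (simp add: mult.assoc)
  then show ?thesis by (simp add: mult_of_int_commute[of b x, symmetric] mult.assoc)
qed

lemma power_int_central:
  fixes t :: "'f::division_ring"
  assumes "\<And>x. t * x = x * t"
  shows "t powi j * x = x * t powi j"
proof -
  have "inverse t * x = x * inverse t"
    by (rule mult_commute_imp_mult_inverse_commute) (rule assms)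
  then show ?thesis
    unfolding power_int_def by (auto intro: power_commuting_commutes assms)
qed

lemma central_conj:
  fixes Y g :: "'f::division_ring"
  assumes "Y \<noteq> 0" "\<And>x. g * x = x * g"
  shows "Y * g * inverse Y = g" and "inverse Y * g * Y = g"
proof -
  have comm: "Y * g = g * Y" using assms(2)[of Y] by simp
  have "Y * g * inverse Y = g * (Y * inverse Y)" by (simp only: comm mult.assoc)
  then show "Y * g * inverse Y = g" using assms(1) by simp
  have "inverse Y * g * Y = (inverse Y * Y) * g" by (simp only: comm mult.assoc)
  then show "inverse Y * g * Y = g" using assms(1) by simp
qed

lemma lattice_zero: "(\<lambda>_. 0) \<in> lattice m"
  by (simp add: lattice_def)

lemma lattice_add: "c \<in> lattice m \<Longrightarrow> c' \<in> lattice m \<Longrightarrow> (\<lambda>k. c k + c' k) \<in> lattice m"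
  unfolding lattice_def by (auto, (metis add.right_neutral)+)

lemma lattice_uminus: "c \<in> lattice m \<Longrightarrow> (\<lambda>k. - c k) \<in> lattice m"
  by (auto simp: lattice_def)

lemma lattice_unitvec: "k \<in> {1..m} \<Longrightarrow> \<ee> k \<in> lattice m"
  by (auto simp: lattice_def unitvec_def)

lemma bilin_zero_right: "bilin m L c (\<lambda>_. 0) = 0"
  by (simp add: bilin_def)

lemma power_int_subring_gen:
  "t \<in> S \<Longrightarrow> inverse t \<in> S \<Longrightarrow> t powi k \<in> subring_gen S"
  by (simp add: power_int_def subring_gen_power subring_gen.gen)

lemma laurent_coeffs_subring_gen:
  assumes "t \<in> S" "inverse t \<in> S" "y \<in> laurent_coeffs t"
  shows "y \<in> subring_gen S"
proof -
  obtain J a where y: "y = (\<Sum>k\<in>J. of_int (a k) * t powi k)"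
    using assms(3) unfolding laurent_coeffs_def by blast
  show ?thesis unfolding y
    by (intro subring_gen_sum subring_gen.mult subring_gen_of_int power_int_subring_gen assms(1,2))
qed

locale quantum_seed_setting =
  fixes m n :: nat and t :: "'f::division_ring" and X :: "(nat \<Rightarrow> int) \<Rightarrow> 'f"
    and h :: "nat \<Rightarrow> nat \<Rightarrow> 'f" and d :: "nat \<Rightarrow> nat"
    and L B :: "nat \<Rightarrow> nat \<Rightarrow> int"
  assumes seed: "quantum_seed m n t X h d L B"
begin

lemma one_le_n: "1 \<le> n"
  using seed unfolding quantum_seed_def by (elim conjE) assumption

lemma n_le_m: "n \<le> m"
  using seed unfolding quantum_seed_def by (elim conjE) assumption

lemma compatible: "compatible_pair m n L B"
  using seed unfolding quantum_seed_def by (elim conjE) assumption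

lemma L_skew: "k \<in> {1..m} \<Longrightarrow> l \<in> {1..m} \<Longrightarrow> L k l = - L l k"
  using compatible unfolding compatible_pair_def skew_symmetric_def by blast

lemma compatible_offdiag:
  "k \<in> {1..m} \<Longrightarrow> l \<in> {1..n} \<Longrightarrow> k \<noteq> l \<Longrightarrow> (\<Sum>j\<in>{1..m}. L k j * B j l) = 0"
  using compatible unfolding compatible_pair_def by auto

lemma compatible_diag: "l \<in> {1..n} \<Longrightarrow> (\<Sum>j\<in>{1..m}. L l j * B j l) < 0"
  using compatible n_le_m unfolding compatible_pair_def by fastforce

lemma d_pos: "k \<in> {1..n} \<Longrightarrow> d k > 0"
  and d_dvd: "k \<in> {1..n} \<Longrightarrow> j \<in> {1..m} \<Longrightarrow> int (d k) dvd B j k"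
  using seed unfolding quantum_seed_def by (elim conjE; fast)+

lemma h_laurent_coeffs: "k \<in> {1..n} \<Longrightarrow> r \<le> d k \<Longrightarrow> h k r \<in> laurent_coeffs t"
  and h_first: "k \<in> {1..n} \<Longrightarrow> h k 0 = 1"
  and h_last: "k \<in> {1..n} \<Longrightarrow> h k (d k) = 1"
  using seed unfolding quantum_seed_def by (elim conjE; fast)+

lemma t_central: "t * x = x * t"
  using seed unfolding quantum_seed_def by (elim conjE) fast

lemma X_mult:
  assumes "c \<in> lattice m" "c' \<in> lattice m"
  shows "X c * X c' = t powi (bilin m L c c') * X (\<lambda>k. c k + c' k)"
proof -
  have "\<forall>c\<in>lattice m. \<forall>c'\<in>lattice m. X c * X c' = t powi (bilin m L c c') * X (\<lambda>k. c k + c' k)"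
    using seed unfolding quantum_seed_def by (elim conjE) assumption
  then show ?thesis using assms by blast
qed

lemma monomials_independent:
  assumes "finite S" "S \<subseteq> lattice m \<times> UNIV"
    "(\<Sum>p\<in>S. of_int (a p) * t powi (snd p) * X (fst p)) = 0" "p \<in> S"
  shows "a p = 0"
proof -
  have "\<forall>S a. finite S \<longrightarrow> S \<subseteq> lattice m \<times> UNIV \<longrightarrow>
         (\<Sum>p\<in>S. of_int (a p) * t powi (snd p) * X (fst p)) = 0 \<longrightarrow> (\<forall>p\<in>S. a p = 0)"
    using seed unfolding quantum_seed_def by (elim conjE) assumption
  then show ?thesis using assms by blast
qed

lemma X_nonzero: "c \<in> lattice m \<Longrightarrow> X c \<noteq> 0"
  using monomials_independent[of "{(c, 0)}" "\<lambda>_. 1"] by auto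

lemma t_nonzero: "t \<noteq> 0"
  using monomials_independent[of "{(\<lambda>_. 0, 1)}" "\<lambda>_. 1"] lattice_zero by auto

lemma X_zero: "X (\<lambda>_. 0) = 1"
proof -
  have "X (\<lambda>_. 0) * X (\<lambda>_. 0) = 1 * X (\<lambda>_. 0)"
    using X_mult[OF lattice_zero lattice_zero] by (simp add: bilin_zero_right)
  then show ?thesis using X_nonzero[OF lattice_zero] by (metis mult_right_cancel)
qed

lemma power_int_t_central: "t powi j * x = x * t powi j"
  by (rule power_int_central) (rule t_central)

lemma power_int_t_add: "t powi a * t powi b = t powi (a + b)"
  using t_nonzero by (simp add: power_int_add)

lemma bilin_antisym:
  assumes "c \<in> lattice m" "c' \<in> lattice m"
  shows "bilin m L c c' = - bilin m L c' c"
proof -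
  have "bilin m L c c' = (\<Sum>l\<in>{1..m}. \<Sum>k\<in>{1..m}. c k * L k l * c' l)"
    unfolding bilin_def by (rule sum.swap)
  also have "\<dots> = (\<Sum>l\<in>{1..m}. \<Sum>k\<in>{1..m}. - (c' l * L l k * c k))"
  proof (intro sum.cong refl)
    fix l k assume "l \<in> {1..m}" "k \<in> {1..m}"
    then show "c k * L k l * c' l = - (c' l * L l k * c k)" using L_skew[of k l] by simp
  qed
  also have "\<dots> = - bilin m L c' c" by (simp add: bilin_def sum_negf)
  finally show ?thesis .
qed

lemma X_commute:
  assumes "c \<in> lattice m" "c' \<in> lattice m"
  shows "X c * X c' = t powi (2 * bilin m L c c') * X c' * X c"
proof -
  let ?s = "X (\<lambda>k. c k + c' k)"
  have "X c' * X c = t powi (- bilin m L c c') * ?s"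
    using X_mult[OF assms(2,1)] bilin_antisym[OF assms] by (simp add: add.commute)
  then have "t powi (2 * bilin m L c c') * X c' * X c
      = (t powi (2 * bilin m L c c') * t powi (- bilin m L c c')) * ?s"
    by (simp add: mult.assoc)
  also have "\<dots> = X c * X c'" by (simp add: power_int_t_add X_mult assms)
  finally show ?thesis by simp
qed

lemma X_uminus_unitvec:
  assumes "k \<in> {1..m}"
  shows "X (\<lambda>j. - \<ee> k j) = inverse (X (\<ee> k))"
proof -
  have "bilin m L (\<ee> k) (\<lambda>j. - \<ee> k j) = 0"
    using L_skew[OF assms assms] unfolding bilin_def by (intro sum.neutral ballI) (simp add: unitvec_def)
  then have "X (\<ee> k) * X (\<lambda>j. - \<ee> k j) = 1"
    using X_mult[OF lattice_unitvec[OF assms] lattice_uminus[OF lattice_unitvec[OF assms]]]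
    by (simp add: X_zero)
  then show ?thesis by (metis inverse_unique)
qed

lemma laurent_coeffs_central:
  assumes "y \<in> laurent_coeffs t"
  shows "y * x = x * y"
proof -
  obtain J a where y: "y = (\<Sum>k\<in>J. of_int (a k) * t powi k)"
    using assms unfolding laurent_coeffs_def by blast
  have "of_int (a k) * t powi k * x = x * (of_int (a k) * t powi k)" for k
  proof -
    have "of_int (a k) * t powi k * x = (of_int (a k) * x) * t powi k"
      by (simp only: mult.assoc power_int_t_central)
    also have "\<dots> = x * (of_int (a k) * t powi k)"
      by (simp only: mult_of_int_commute mult.assoc)
    finally show ?thesis .
  qed
  then show ?thesis by (simp add: y sum_distrib_left sum_distrib_right)
qed

lemma X_in_subring_gen:
  assumes K: "K \<subseteq> {1..m}" and S: "t \<in> S" "inverse t \<in> S"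
    "\<And>k. k \<in> K \<Longrightarrow> X (\<ee> k) \<in> S" "\<And>k. k \<in> K \<Longrightarrow> inverse (X (\<ee> k)) \<in> S"
  shows "c \<in> lattice m \<Longrightarrow> (\<And>k. c k \<noteq> 0 \<Longrightarrow> k \<in> K) \<Longrightarrow> X c \<in> subring_gen S"
proof (induction c rule: measure_induct_rule[where f="\<lambda>c. \<Sum>k\<in>{1..m}. nat \<bar>c k\<bar>"])
  case (less c)
  show ?case
  proof (cases "\<exists>k. c k \<noteq> 0")
    case False
    then have "c = (\<lambda>_. 0)" by auto
    then show ?thesis using X_zero subring_gen.one by simp
  next
    case True
    then obtain k where k: "c k \<noteq> 0" by blast
    have kK: "k \<in> K" using less.prems(2) k by blast
    then have km: "k \<in> {1..m}" using K by blast
    define s :: int where "s = (if c k > 0 then 1 else -1)"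
    define u where "u = (\<lambda>j. s * \<ee> k j)"
    define c' where "c' = (\<lambda>j. c j - u j)"
    have u: "u \<in> lattice m" using km by (auto simp: lattice_def u_def unitvec_def)
    have c': "c' \<in> lattice m" using less.prems(1) km
      unfolding lattice_def c'_def u_def unitvec_def by (auto split: if_splits)
    have "(\<Sum>j\<in>{1..m}. nat \<bar>c' j\<bar>) < (\<Sum>j\<in>{1..m}. nat \<bar>c j\<bar>)"
    proof (rule sum_strict_mono_ex1)
      show "\<forall>j\<in>{1..m}. nat \<bar>c' j\<bar> \<le> nat \<bar>c j\<bar>"
        using k by (auto simp: c'_def u_def unitvec_def s_def)
      show "\<exists>j\<in>{1..m}. nat \<bar>c' j\<bar> < nat \<bar>c j\<bar>"
        using k km by (intro bexI[of _ k]) (auto simp: c'_def u_def unitvec_def s_def)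
    qed simp
    moreover have "c' j \<noteq> 0 \<Longrightarrow> j \<in> K" for j
      using less.prems(2)[of j] kK by (auto simp: c'_def u_def unitvec_def split: if_splits)
    ultimately have IH: "X c' \<in> subring_gen S" using less.IH c' by blast
    have "X u \<in> S"
    proof (cases "c k > 0")
      case True then have "u = \<ee> k" by (auto simp: u_def s_def)
      then show ?thesis using S(3)[OF kK] by simp
    next
      case False then have "u = (\<lambda>j. - \<ee> k j)" by (auto simp: u_def s_def)
      then show ?thesis using S(4)[OF kK] X_uminus_unitvec[OF km] by simp
    qed
    moreover have "X c' * X u = t powi (bilin m L c' u) * X c"
      using X_mult[OF c' u] by (simp add: c'_def)
    then have "X c = t powi (- bilin m L c' u) * (X c' * X u)"
      by (simp add: power_int_t_add flip: mult.assoc)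
    ultimately show ?thesis
      by (simp add: subring_gen.mult subring_gen.gen power_int_subring_gen S(1,2) IH)
  qed
qed

lemma quasi_commute_conj:
  assumes "Y \<noteq> 0" and "X c * Y = t powi j * Y * X c"
  shows "Y * X c * inverse Y = t powi (- j) * X c" and "inverse Y * X c * Y = t powi j * X c"
proof -
  have "inverse Y * X c * Y = (inverse Y * Y) * (t powi j * X c)"
    using assms(2) by (simp add: mult.assoc power_int_t_central)
  then show "inverse Y * X c * Y = t powi j * X c" using assms(1) by simp
  have "Y * X c = t powi (- j) * (X c * Y)"
    using assms(2) by (simp add: mult.assoc power_int_t_add flip: mult.assoc[of "t powi (- j)"])
  then have "Y * X c * inverse Y = t powi (- j) * X c * (Y * inverse Y)"
    by (simp add: mult.assoc)
  then show "Y * X c * inverse Y = t powi (- j) * X c" using assms(1) by simp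
qed

text \<open>By linear independence of the monomials, the exponent of \<open>X (\<ee> j)\<close> is a grading of the
  quantum torus; \<open>degree_span j P\<close> consists of the elements whose degrees satisfy \<open>P\<close>.\<close>

definition degree_span :: "nat \<Rightarrow> (int \<Rightarrow> bool) \<Rightarrow> 'f set" where
  "degree_span j P = {\<Sum>p\<in>S. of_int (a p) * t powi (snd p) * X (fst p) | S a.
       finite S \<and> S \<subseteq> {c \<in> lattice m. P (c j)} \<times> UNIV}"

lemma degree_spanI:
  "finite S \<Longrightarrow> S \<subseteq> {c \<in> lattice m. P (c j)} \<times> UNIV \<Longrightarrow>
   (\<Sum>p\<in>S. of_int (a p) * t powi (snd p) * X (fst p)) \<in> degree_span j P"
  unfolding degree_span_def by blast

lemma degree_span_zero: "0 \<in> degree_span j P"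
  using degree_spanI[of "{}"] by simp

lemma degree_span_monomial: "c \<in> lattice m \<Longrightarrow> P (c j) \<Longrightarrow> t powi k * X c \<in> degree_span j P"
  using degree_spanI[of "{(c, k)}" P j "\<lambda>_. 1"] by simp

lemma degree_span_X: "c \<in> lattice m \<Longrightarrow> P (c j) \<Longrightarrow> X c \<in> degree_span j P"
  using degree_span_monomial[where k=0] by simp

lemma degree_span_power_int_t: "t powi k \<in> degree_span j (\<lambda>z. z = 0)"
  using degree_span_monomial[OF lattice_zero, where P="\<lambda>z. z = 0"] by (simp add: X_zero)

lemma degree_span_add:
  assumes "x \<in> degree_span j P" "y \<in> degree_span j P"
  shows "x + y \<in> degree_span j P"
proof -
  let ?f = "\<lambda>a p. of_int (a p) * t powi (snd p) * X (fst p)"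
  obtain S1 a1 where 1: "x = (\<Sum>p\<in>S1. ?f a1 p)" "finite S1" "S1 \<subseteq> {c \<in> lattice m. P (c j)} \<times> UNIV"
    using assms(1) unfolding degree_span_def by blast
  obtain S2 a2 where 2: "y = (\<Sum>p\<in>S2. ?f a2 p)" "finite S2" "S2 \<subseteq> {c \<in> lattice m. P (c j)} \<times> UNIV"
    using assms(2) unfolding degree_span_def by blast
  define a where "a p = (if p \<in> S1 then a1 p else 0) + (if p \<in> S2 then a2 p else 0)" for p
  have "x + y = (\<Sum>p\<in>S1 \<union> S2. if p \<in> S1 then ?f a1 p else 0)
      + (\<Sum>p\<in>S1 \<union> S2. if p \<in> S2 then ?f a2 p else 0)"
    using 1 2 by (simp add: sum.If_cases Int_absorb1 Int_absorb2)
  also have "\<dots> = (\<Sum>p\<in>S1 \<union> S2. ?f a p)"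
    by (subst sum.distrib[symmetric], intro sum.cong refl) (auto simp: a_def distrib_right)
  also have "\<dots> \<in> degree_span j P"
    using 1 2 by (intro degree_spanI) auto
  finally show ?thesis .
qed

lemma degree_span_sum:
  "(\<And>a. a \<in> F \<Longrightarrow> g a \<in> degree_span j P) \<Longrightarrow> (\<Sum>a\<in>F. g a) \<in> degree_span j P"
  by (induction F rule: infinite_finite_induct) (auto intro: degree_span_zero degree_span_add)

lemma degree_span_of_int_mult:
  assumes "x \<in> degree_span j P"
  shows "of_int k * x \<in> degree_span j P"
proof -
  obtain S a where x: "x = (\<Sum>p\<in>S. of_int (a p) * t powi (snd p) * X (fst p))" "finite S"
    "S \<subseteq> {c \<in> lattice m. P (c j)} \<times> UNIV"
    using assms unfolding degree_span_def by blast
  have "of_int k * x = (\<Sum>p\<in>S. of_int (k * a p) * t powi (snd p) * X (fst p))"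
    by (simp add: x(1) sum_distrib_left mult.assoc)
  also have "\<dots> \<in> degree_span j P" using x by (intro degree_spanI)
  finally show ?thesis .
qed

lemma degree_span_uminus: "x \<in> degree_span j P \<Longrightarrow> - x \<in> degree_span j P"
  using degree_span_of_int_mult[of x j P "-1"] by simp

lemma degree_span_diff: "x \<in> degree_span j P \<Longrightarrow> y \<in> degree_span j P \<Longrightarrow> x - y \<in> degree_span j P"
  using degree_span_add degree_span_uminus by (metis diff_conv_add_uminus)

lemma degree_span_mono:
  assumes "x \<in> degree_span j P" "\<And>z. P z \<Longrightarrow> Q z"
  shows "x \<in> degree_span j Q"
proof -
  obtain S a where "x = (\<Sum>p\<in>S. of_int (a p) * t powi (snd p) * X (fst p))" "finite S"
    "S \<subseteq> {c \<in> lattice m. P (c j)} \<times> UNIV"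
    using assms(1) unfolding degree_span_def by blast
  then show ?thesis using assms(2) unfolding degree_span_def by blast
qed

lemma degree_span_mult:
  assumes "x \<in> degree_span j P" "y \<in> degree_span j Q" "\<And>a b. P a \<Longrightarrow> Q b \<Longrightarrow> R (a + b)"
  shows "x * y \<in> degree_span j R"
proof -
  let ?g = "\<lambda>p. t powi (snd p) * X (fst p)"
  obtain S1 a1 where 1: "x = (\<Sum>p\<in>S1. of_int (a1 p) * ?g p)" "S1 \<subseteq> {c \<in> lattice m. P (c j)} \<times> UNIV"
    using assms(1) unfolding degree_span_def by (auto simp: mult.assoc)
  obtain S2 a2 where 2: "y = (\<Sum>p\<in>S2. of_int (a2 p) * ?g p)" "S2 \<subseteq> {c \<in> lattice m. Q (c j)} \<times> UNIV"
    using assms(2) unfolding degree_span_def by (auto simp: mult.assoc)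
  have monomial: "?g p * ?g q \<in> degree_span j R" if "p \<in> S1" "q \<in> S2" for p q
  proof -
    obtain c k c' k' where pq: "p = (c, k)" "q = (c', k')" by fastforce
    have c: "c \<in> lattice m" "P (c j)" and c': "c' \<in> lattice m" "Q (c' j)"
      using that 1(2) 2(2) pq by auto
    have "?g p * ?g q = t powi k * (X c * t powi k') * X c'"
      by (simp add: pq mult.assoc)
    also have "\<dots> = t powi k * (t powi k' * X c) * X c'"
      by (simp only: power_int_t_central[of k' "X c"])
    also have "\<dots> = (t powi k * t powi k') * (X c * X c')"
      by (simp only: mult.assoc)
    also have "\<dots> = t powi (k + k' + bilin m L c c') * X (\<lambda>i. c i + c' i)"
      by (simp add: X_mult c c' power_int_t_add flip: mult.assoc)
    also have "\<dots> \<in> degree_span j R"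
      using c c' assms(3) by (intro degree_span_monomial lattice_add) auto
    finally show ?thesis .
  qed
  have "x * y = (\<Sum>q\<in>S2. \<Sum>p\<in>S1. (of_int (a1 p) * ?g p) * (of_int (a2 q) * ?g q))"
    by (simp add: 1(1) 2(1) sum_distrib_left sum_distrib_right)
  also have "\<dots> = (\<Sum>q\<in>S2. \<Sum>p\<in>S1. of_int (a1 p * a2 q) * (?g p * ?g q))"
    by (simp only: of_int_mult_mult_of_int_mult)
  also have "\<dots> \<in> degree_span j R"
    by (intro degree_span_sum degree_span_of_int_mult monomial)
  finally show ?thesis .
qed

lemma degree_span_power:
  "y \<in> degree_span j (\<lambda>z. z = a) \<Longrightarrow> y ^ k \<in> degree_span j (\<lambda>z. z = int k * a)"
proof (induction k)
  case 0
  then show ?case using degree_span_power_int_t[of 0 j] by simp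
next
  case (Suc k)
  have "y * y ^ k \<in> degree_span j (\<lambda>z. z = int (Suc k) * a)"
    by (rule degree_span_mult[OF Suc.prems Suc.IH[OF Suc.prems]]) (simp add: algebra_simps)
  then show ?case by simp
qed

lemma degree_span_disjoint:
  assumes "x \<in> degree_span j P" "x \<in> degree_span j Q" "\<And>z. \<not> (P z \<and> Q z)"
  shows "x = 0"
proof -
  let ?f = "\<lambda>a p. of_int (a p) * t powi (snd p) * X (fst p)"
  obtain S1 a1 where 1: "x = (\<Sum>p\<in>S1. ?f a1 p)" "finite S1" "S1 \<subseteq> {c \<in> lattice m. P (c j)} \<times> UNIV"
    using assms(1) unfolding degree_span_def by blast
  obtain S2 a2 where 2: "x = (\<Sum>p\<in>S2. ?f a2 p)" "finite S2" "S2 \<subseteq> {c \<in> lattice m. Q (c j)} \<times> UNIV"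
    using assms(2) unfolding degree_span_def by blast
  have disj: "S1 \<inter> S2 = {}" using 1(3) 2(3) assms(3) by auto
  define a where "a p = (if p \<in> S1 then a1 p else - a2 p)" for p
  have "(\<Sum>p\<in>S1. ?f a p) = x"
    unfolding 1(1) by (intro sum.cong refl) (simp add: a_def)
  moreover have "(\<Sum>p\<in>S2. ?f a p) = - x"
    unfolding 2(1) sum_negf[symmetric] using disj by (intro sum.cong refl) (auto simp: a_def)
  ultimately have "(\<Sum>p\<in>S1 \<union> S2. ?f a p) = 0"
    by (simp add: sum.union_disjoint[OF 1(2) 2(2) disj])
  then have "\<forall>p\<in>S1. a p = 0"
    using monomials_independent[of "S1 \<union> S2" a] 1 2 by blast
  then show ?thesis by (simp add: 1(1) a_def)
qed

lemma laurent_coeffs_degree_zero: "y \<in> laurent_coeffs t \<Longrightarrow> y \<in> degree_span j (\<lambda>z. z = 0)"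
  unfolding laurent_coeffs_def
  by (auto intro!: degree_span_sum degree_span_of_int_mult degree_span_power_int_t)

section \<open>Mutation in direction \<open>i\<close>\<close>

lemma B_diag:
  assumes i: "i \<in> {1..n}"
  shows "B i i = 0"
proof -
  have im: "i \<in> {1..m}" using i n_le_m by auto
  define b where "b j = (if j \<in> {1..m} then B j i else 0)" for j
  have b: "b \<in> lattice m" by (auto simp: b_def lattice_def split: if_splits)
  have "bilin m L b b = (\<Sum>k\<in>{1..m}. B k i * (\<Sum>j\<in>{1..m}. L k j * B j i))"
    by (simp add: bilin_def b_def sum_distrib_left mult.assoc)
  also have "\<dots> = B i i * (\<Sum>j\<in>{1..m}. L i j * B j i)
      + (\<Sum>k\<in>{1..m} - {i}. B k i * (\<Sum>j\<in>{1..m}. L k j * B j i))"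
    by (rule sum.remove[OF _ im]) simp
  also have "(\<Sum>k\<in>{1..m} - {i}. B k i * (\<Sum>j\<in>{1..m}. L k j * B j i)) = 0"
    using compatible_offdiag[OF _ i] by (intro sum.neutral) simp
  finally have "B i i * (\<Sum>j\<in>{1..m}. L i j * B j i) = 0"
    using bilin_antisym[OF b b] by simp
  then show ?thesis using compatible_diag[OF i] by simp
qed

definition gens_without :: "nat \<Rightarrow> 'f set" where
  "gens_without i = ZP_gens m n t X \<union> (\<Union>k\<in>{1..n} - {i}. {X (\<ee> k), inverse (X (\<ee> k))})"

definition mutation_exponent :: "nat \<Rightarrow> nat \<Rightarrow> nat \<Rightarrow> int" where
  "mutation_exponent i r = (\<lambda>j. int r * posp (beta m B d i) j
      + int (d i - r) * posp (\<lambda>l. - beta m B d i l) j - \<ee> i j)"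

lemma mutated_var_eq:
  "mutated_var m X h d B i = (\<Sum>r\<in>{0..d i}. h i r * X (mutation_exponent i r))"
  unfolding mutated_var_def mutation_exponent_def ..

definition exchange_ring :: "nat \<Rightarrow> 'f set" where
  "exchange_ring i = subring_gen (gens_without i \<union> {X (\<ee> i), mutated_var m X h d B i})"

context
  fixes i assumes i: "i \<in> {1..n}"
begin

abbreviation "\<beta> \<equiv> beta m B d i"

abbreviation "X' \<equiv> mutated_var m X h d B i"

lemma i_mem: "i \<in> {1..m}"
  using i n_le_m by auto

lemma beta_at_i: "\<beta> i = 0"
  using i_mem B_diag[OF i] by (simp add: beta_def)

lemma d_mult_beta: "l \<in> {1..m} \<Longrightarrow> int (d i) * \<beta> l = B l i"
  using d_dvd[OF i] by (simp add: beta_def)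

lemma beta_outside: "l \<notin> {1..m} \<Longrightarrow> \<beta> l = 0"
  by (auto simp: beta_def)

lemma mutation_exponent_lattice: "mutation_exponent i r \<in> lattice m"
  unfolding lattice_def
proof (intro CollectI allI impI)
  fix k assume "mutation_exponent i r k \<noteq> 0"
  then show "k \<in> {1..m}"
    using i_mem by (cases "k \<in> {1..m}") (auto simp: mutation_exponent_def posp_def unitvec_def beta_outside)
qed

lemma mutation_exponent_at_i: "mutation_exponent i r i = -1"
  by (simp add: mutation_exponent_def posp_def beta_at_i unitvec_def)

lemma mutation_exponent_linear:
  assumes "r \<le> d i"
  shows "mutation_exponent i r l = mutation_exponent i 0 l + int r * \<beta> l"
proof -
  have e: "int (d i - r) = int (d i) - int r" using assms by simp
  show ?thesis unfolding mutation_exponent_def posp_def e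
    by (cases "\<beta> l \<ge> 0") (auto simp: max_def algebra_simps)
qed

lemma L_beta_orthogonal:
  assumes "k \<in> {1..m}" "k \<noteq> i"
  shows "(\<Sum>l\<in>{1..m}. L k l * \<beta> l) = 0"
proof -
  have "int (d i) * (\<Sum>l\<in>{1..m}. L k l * \<beta> l) = (\<Sum>l\<in>{1..m}. L k l * B l i)"
    by (simp add: sum_distrib_left flip: d_mult_beta) (simp add: algebra_simps)
  also have "\<dots> = 0" using compatible_offdiag[OF assms(1) i assms(2)] .
  finally show ?thesis using d_pos[OF i] by simp
qed

text \<open>Compatibility makes all terms of \<open>X'\<close> quasi-commute with \<open>X c\<close>, \<open>c i = 0\<close>, by the same power of \<open>t\<close>.\<close>

lemma bilin_mutation_exponent:
  assumes c: "c \<in> lattice m" "c i = 0" and r: "r \<le> d i"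
  shows "bilin m L c (mutation_exponent i r) = bilin m L c (mutation_exponent i 0)"
proof -
  have "bilin m L c (mutation_exponent i r)
      = bilin m L c (mutation_exponent i 0) + int r * (\<Sum>k\<in>{1..m}. c k * (\<Sum>l\<in>{1..m}. L k l * \<beta> l))"
    unfolding bilin_def
    by (simp add: mutation_exponent_linear[OF r] algebra_simps sum.distrib sum_distrib_left)
  also have "(\<Sum>k\<in>{1..m}. c k * (\<Sum>l\<in>{1..m}. L k l * \<beta> l)) = 0"
    using c(2) L_beta_orthogonal by (intro sum.neutral) (metis mult_eq_0_iff)
  finally show ?thesis by simp
qed

lemma mutated_var_degree: "X' \<in> degree_span i (\<lambda>z. z = -1)"
  unfolding mutated_var_eq
proof (rule degree_span_sum)
  fix r assume "r \<in> {0..d i}"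
  then have "h i r \<in> degree_span i (\<lambda>z. z = 0)"
    using laurent_coeffs_degree_zero h_laurent_coeffs[OF i] by auto
  moreover have "X (mutation_exponent i r) \<in> degree_span i (\<lambda>z. z = -1)"
    using degree_span_X[OF mutation_exponent_lattice] mutation_exponent_at_i by simp
  ultimately show "h i r * X (mutation_exponent i r) \<in> degree_span i (\<lambda>z. z = -1)"
    by (rule degree_span_mult) simp
qed

lemma beta_nonzero: obtains l where "l \<in> {1..m}" "\<beta> l \<noteq> 0"
proof -
  have "\<exists>l\<in>{1..m}. B l i \<noteq> 0"
  proof (rule ccontr)
    assume "\<not> (\<exists>l\<in>{1..m}. B l i \<noteq> 0)"
    then have "(\<Sum>j\<in>{1..m}. L i j * B j i) = 0" by simp
    then show False using compatible_diag[OF i] by simp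
  qed
  then obtain l where "l \<in> {1..m}" "B l i \<noteq> 0" by blast
  then show ?thesis using that[of l] d_mult_beta[of l] by fastforce
qed

text \<open>The term of \<open>X'\<close> with \<open>l\<close>-th exponent \<open>0\<close> cannot cancel against the others, so \<open>X' \<noteq> 0\<close>.\<close>

lemma mutation_exponent_extremal:
  obtains r\<^sub>0 l where "r\<^sub>0 \<in> {0..d i}" "h i r\<^sub>0 = 1" "mutation_exponent i r\<^sub>0 l = 0"
    "\<And>r. r \<in> {0..d i} - {r\<^sub>0} \<Longrightarrow> mutation_exponent i r l > 0"
proof -
  obtain l where l: "l \<in> {1..m}" "\<beta> l \<noteq> 0" by (rule beta_nonzero)
  have "l \<noteq> i" using l beta_at_i by auto
  then have w0: "mutation_exponent i 0 l = int (d i) * max (- \<beta> l) 0"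
    by (simp add: mutation_exponent_def posp_def unitvec_def)
  show ?thesis
  proof (cases "\<beta> l > 0")
    case True
    show ?thesis
    proof (rule that[of 0 l])
      fix r assume "r \<in> {0..d i} - {0}"
      then show "mutation_exponent i r l > 0" using mutation_exponent_linear[of r l] w0 True by auto
    qed (use h_first[OF i] w0 True in auto)
  next
    case False
    then have neg: "\<beta> l < 0" using l by simp
    show ?thesis
    proof (rule that[of "d i" l])
      fix r assume r: "r \<in> {0..d i} - {d i}"
      then have "mutation_exponent i r l = (int (d i) - int r) * (- \<beta> l)"
        using mutation_exponent_linear[of r l] w0 neg by (auto simp: algebra_simps)
      moreover have "int (d i) - int r > 0" using r by auto
      ultimately show "mutation_exponent i r l > 0" using neg by (simp add: mult_pos_neg)
    next
      show "mutation_exponent i (d i) l = 0"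
        using mutation_exponent_linear[of "d i" l] w0 neg by (simp add: algebra_simps)
    qed (use h_last[OF i] in auto)
  qed
qed

lemma mutated_var_nonzero: "X' \<noteq> 0"
proof
  assume X'0: "X' = 0"
  obtain r\<^sub>0 l where r\<^sub>0: "r\<^sub>0 \<in> {0..d i}" "h i r\<^sub>0 = 1" "mutation_exponent i r\<^sub>0 l = 0"
    and pos: "\<And>r. r \<in> {0..d i} - {r\<^sub>0} \<Longrightarrow> mutation_exponent i r l > 0"
    using mutation_exponent_extremal by blast
  define rest where "rest = (\<Sum>r\<in>{0..d i} - {r\<^sub>0}. h i r * X (mutation_exponent i r))"
  have "X' = X (mutation_exponent i r\<^sub>0) + rest"
    unfolding mutated_var_eq rest_def using r\<^sub>0 by (simp add: sum.remove)
  then have "X (mutation_exponent i r\<^sub>0) = - rest" using X'0 by (simp add: eq_neg_iff_add_eq_0)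
  moreover have "rest \<in> degree_span l (\<lambda>z. z > 0)" unfolding rest_def
  proof (rule degree_span_sum)
    fix r assume r: "r \<in> {0..d i} - {r\<^sub>0}"
    then have "h i r \<in> degree_span l (\<lambda>z. z = 0)"
      using laurent_coeffs_degree_zero h_laurent_coeffs[OF i] by auto
    moreover have "X (mutation_exponent i r) \<in> degree_span l (\<lambda>z. z > 0)"
      using degree_span_X[OF mutation_exponent_lattice] pos[OF r] by simp
    ultimately show "h i r * X (mutation_exponent i r) \<in> degree_span l (\<lambda>z. z > 0)"
      by (rule degree_span_mult) simp
  qed
  ultimately have "X (mutation_exponent i r\<^sub>0) \<in> degree_span l (\<lambda>z. z > 0)"
    using degree_span_uminus by simp
  moreover have "X (mutation_exponent i r\<^sub>0) \<in> degree_span l (\<lambda>z. z = 0)"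
    using degree_span_X[OF mutation_exponent_lattice] r\<^sub>0(3) by simp
  ultimately have "X (mutation_exponent i r\<^sub>0) = 0"
    by (rule degree_span_disjoint) auto
  then show False using X_nonzero[OF mutation_exponent_lattice] by simp
qed

lemma mutated_var_quasi_commute:
  assumes c: "c \<in> lattice m" "c i = 0"
  shows "X c * X' = t powi (2 * bilin m L c (mutation_exponent i 0)) * X' * X c"
proof -
  let ?q = "t powi (2 * bilin m L c (mutation_exponent i 0))"
  have summand: "X c * (h i r * X (mutation_exponent i r)) = ?q * (h i r * X (mutation_exponent i r)) * X c"
    if r: "r \<in> {0..d i}" for r
  proof -
    have "h i r \<in> laurent_coeffs t" using h_laurent_coeffs[OF i] r by simp
    then have hc: "X c * h i r = h i r * X c" by (rule laurent_coeffs_central[symmetric])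
    have xc: "X c * X (mutation_exponent i r) = ?q * X (mutation_exponent i r) * X c"
      using X_commute[OF c(1) mutation_exponent_lattice, of r] bilin_mutation_exponent[OF c, of r] r
      by simp
    have hq: "h i r * ?q = ?q * h i r" by (rule power_int_t_central[symmetric])
    have "X c * (h i r * X (mutation_exponent i r)) = h i r * (X c * X (mutation_exponent i r))"
      by (simp add: hc flip: mult.assoc)
    also have "\<dots> = (h i r * ?q) * (X (mutation_exponent i r) * X c)"
      by (simp add: xc mult.assoc)
    also have "\<dots> = ?q * (h i r * X (mutation_exponent i r)) * X c"
      by (simp add: hq mult.assoc)
    finally show ?thesis .
  qed
  have "X c * X' = (\<Sum>r\<in>{0..d i}. X c * (h i r * X (mutation_exponent i r)))"
    by (simp add: mutated_var_eq sum_distrib_left)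
  also have "\<dots> = (\<Sum>r\<in>{0..d i}. ?q * (h i r * X (mutation_exponent i r)) * X c)"
    by (intro sum.cong refl summand)
  also have "\<dots> = ?q * X' * X c"
    by (simp add: mutated_var_eq sum_distrib_left sum_distrib_right)
  finally show ?thesis .
qed


lemma t_mem_gens_without: "t \<in> gens_without i" "inverse t \<in> gens_without i"
  by (auto simp: gens_without_def ZP_gens_def)

lemma X_unitvec_mem_gens_without:
  "k \<in> {1..m} \<Longrightarrow> k \<noteq> i \<Longrightarrow> X (\<ee> k) \<in> gens_without i \<and> inverse (X (\<ee> k)) \<in> gens_without i"
  by (cases "k \<le> n") (auto simp: gens_without_def ZP_gens_def)

lemma gens_without_cases:
  assumes "g \<in> gens_without i"
  obtains "g = t" | "g = inverse t" | c where "c \<in> lattice m" "c i = 0" "g = X c"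
proof -
  have "k \<in> {n+1..m} \<union> ({1..n} - {i}) \<Longrightarrow> k \<in> {1..m} \<and> k \<noteq> i" for k
    using i n_le_m by auto
  then consider "g = t" | "g = inverse t"
    | k where "k \<in> {1..m}" "k \<noteq> i" "g = X (\<ee> k) \<or> g = inverse (X (\<ee> k))"
    using assms unfolding gens_without_def ZP_gens_def by blast
  then show ?thesis
  proof cases
    case (3 k)
    have "\<ee> k \<in> lattice m" "(\<lambda>j. - \<ee> k j) \<in> lattice m" "\<ee> k i = 0"
      using 3 lattice_unitvec lattice_uminus by (auto simp: unitvec_def)
    then show ?thesis using 3(3) X_uminus_unitvec[OF 3(1)] that(3) by force
  qed (use that in auto)
qed

lemma subring_gen_gens_without_degree_zero:
  "subring_gen (gens_without i) \<subseteq> degree_span i (\<lambda>z. z = 0)"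
proof (rule subring_gen_least)
  show "gens_without i \<subseteq> degree_span i (\<lambda>z. z = 0)"
  proof
    fix g assume "g \<in> gens_without i"
    then show "g \<in> degree_span i (\<lambda>z. z = 0)"
      using degree_span_power_int_t[of 1 i] degree_span_power_int_t[of "-1" i] degree_span_X
      by (cases rule: gens_without_cases) (auto simp: power_int_minus)
  qed
  show "1 \<in> degree_span i (\<lambda>z. z = 0)" using degree_span_power_int_t[of 0 i] by simp
qed (auto intro: degree_span_diff degree_span_mult)

lemma normalized_subring_gens_without:
  assumes "Y \<noteq> 0" "\<And>c. c \<in> lattice m \<Longrightarrow> c i = 0 \<Longrightarrow> \<exists>j. X c * Y = t powi j * Y * X c"
  shows "normalized_subring (subring_gen (gens_without i)) Y"
proof -
  let ?R = "subring_gen (gens_without i)"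
  have "Y * g * inverse Y \<in> ?R \<and> inverse Y * g * Y \<in> ?R" if g: "g \<in> gens_without i" for g
  proof -
    have tk: "t powi k \<in> ?R" for k by (rule power_int_subring_gen) (use t_mem_gens_without in auto)
    from g show ?thesis
    proof (cases rule: gens_without_cases)
      case (3 c)
      then obtain j where "X c * Y = t powi j * Y * X c" using assms(2) by blast
      then have "Y * X c * inverse Y = t powi (- j) * X c" "inverse Y * X c * Y = t powi j * X c"
        by (rule quasi_commute_conj[OF assms(1)])+
      then show ?thesis
        using 3 g tk by (auto intro: subring_gen.mult subring_gen.gen)
    qed (use g central_conj[OF assms(1)] t_central power_int_t_central[of "-1"] in
      \<open>auto simp: power_int_minus intro: subring_gen.gen\<close>)
  qed
  then have "Y * x * inverse Y \<in> ?R" "inverse Y * x * Y \<in> ?R" if "x \<in> ?R" for x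
    using that assms(1) subring_gen_conj_closed[of Y "gens_without i"]
      subring_gen_conj_closed[of "inverse Y" "gens_without i"] by auto
  then show ?thesis
    using assms(1) by unfold_locales (auto intro: subring_gen.intros)
qed

lemma L_ring_eq: "L_ring m n t X = subring_gen (gens_without i \<union> {X (\<ee> i), inverse (X (\<ee> i))})"
  unfolding L_ring_def gens_without_def using i by (intro arg_cong[where f=subring_gen]) auto

lemma L_mut_ring_eq: "L_mut_ring m n t X h d B i = subring_gen (gens_without i \<union> {X', inverse X'})"
  by (simp add: L_mut_ring_def gens_without_def)

lemma mutated_var_in_L_ring: "X' \<in> L_ring m n t X"
  unfolding mutated_var_eq L_ring_def
proof (intro subring_gen_sum subring_gen.mult)
  let ?S = "ZP_gens m n t X \<union> (\<Union>k\<in>{1..n}. {X (\<ee> k), inverse (X (\<ee> k))})"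
  fix r assume "r \<in> {0..d i}"
  then show "h i r \<in> subring_gen ?S"
    using h_laurent_coeffs[OF i] by (intro laurent_coeffs_subring_gen) (auto simp: ZP_gens_def)
  have "X (\<ee> k) \<in> ?S \<and> inverse (X (\<ee> k)) \<in> ?S" if "k \<in> {1..m}" for k
    using that by (cases "k \<le> n") (auto simp: ZP_gens_def)
  then show "X (mutation_exponent i r) \<in> subring_gen ?S"
    using mutation_exponent_lattice[of r] mutation_exponent_lattice[of r, unfolded lattice_def]
    by (intro X_in_subring_gen[of "{1..m}"]) (auto simp: ZP_gens_def)
qed

text \<open>\<open>X (\<ee> i) * X'\<close> no longer involves \<open>X (\<ee> i)\<close>, which recovers \<open>X (\<ee> i)\<close> in
  \<open>L(\<mu>\<^sub>i \<Sigma>)\<close>.\<close>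

lemma X_in_L_mut_ring: "X (\<ee> i) \<in> L_mut_ring m n t X h d B i"
proof -
  let ?S = "gens_without i \<union> {X', inverse X'}"
  have t: "t \<in> ?S" "inverse t \<in> ?S" using t_mem_gens_without by auto
  have summand: "X (\<ee> i) * (h i r * X (mutation_exponent i r)) \<in> subring_gen ?S"
    if r: "r \<in> {0..d i}" for r
  proof -
    define u where "u = (\<lambda>k. \<ee> i k + mutation_exponent i r k)"
    have u: "u \<in> lattice m"
      unfolding u_def by (rule lattice_add[OF lattice_unitvec[OF i_mem] mutation_exponent_lattice])
    have hl: "h i r \<in> laurent_coeffs t" using h_laurent_coeffs[OF i] r by simp
    have "X (\<ee> i) * (h i r * X (mutation_exponent i r))
        = h i r * (X (\<ee> i) * X (mutation_exponent i r))"
      by (simp add: laurent_coeffs_central[OF hl, symmetric] flip: mult.assoc)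
    also have "\<dots> = h i r * (t powi (bilin m L (\<ee> i) (mutation_exponent i r)) * X u)"
      using X_mult[OF lattice_unitvec[OF i_mem] mutation_exponent_lattice] by (simp add: u_def)
    also have "\<dots> \<in> subring_gen ?S"
    proof (intro subring_gen.mult laurent_coeffs_subring_gen[OF t hl] power_int_subring_gen[OF t])
      have "u k \<noteq> 0 \<Longrightarrow> k \<in> {1..m} - {i}" for k
        using u mutation_exponent_at_i[of r] unfolding lattice_def by (auto simp: u_def unitvec_def)
      then show "X u \<in> subring_gen ?S"
        using X_unitvec_mem_gens_without t u by (intro X_in_subring_gen[of "{1..m} - {i}"]) auto
    qed
    finally show ?thesis .
  qed
  have "X (\<ee> i) * X' = (\<Sum>r\<in>{0..d i}. X (\<ee> i) * (h i r * X (mutation_exponent i r)))"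
    by (simp only: mutated_var_eq sum_distrib_left)
  also have "\<dots> \<in> subring_gen ?S"
    by (intro subring_gen_sum summand) simp
  finally have "X (\<ee> i) * X' \<in> subring_gen ?S" .
  then have "(X (\<ee> i) * X') * inverse X' \<in> subring_gen ?S"
    by (rule subring_gen.mult[OF _ subring_gen.gen]) simp
  then show ?thesis
    unfolding L_mut_ring_eq using mutated_var_nonzero by (simp add: mult.assoc)
qed

lemma exchange_ring_subset_L_ring: "exchange_ring i \<subseteq> L_ring m n t X"
  unfolding exchange_ring_def L_ring_eq
  using mutated_var_in_L_ring[unfolded L_ring_eq]
  by (intro subring_gen_subset) (auto intro: subring_gen.gen)

lemma exchange_ring_subset_L_mut_ring: "exchange_ring i \<subseteq> L_mut_ring m n t X h d B i"
  unfolding exchange_ring_def L_mut_ring_eq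
  using X_in_L_mut_ring[unfolded L_mut_ring_eq]
  by (intro subring_gen_subset) (auto intro: subring_gen.gen)

lemma X_unitvec_power_int_degree: "X (\<ee> i) powi a \<in> degree_span i (\<lambda>z. z = a)"
proof -
  have pos: "X (\<ee> i) \<in> degree_span i (\<lambda>z. z = 1)"
    using degree_span_X[OF lattice_unitvec[OF i_mem]] by (simp add: unitvec_def)
  have neg: "inverse (X (\<ee> i)) \<in> degree_span i (\<lambda>z. z = -1)"
    using degree_span_X[OF lattice_uminus[OF lattice_unitvec[OF i_mem]]] X_uminus_unitvec[OF i_mem]
    by (simp add: unitvec_def)
  show ?thesis
  proof (cases "a \<ge> 0")
    case True
    have "X (\<ee> i) ^ nat a \<in> degree_span i (\<lambda>z. z = int (nat a) * 1)"
      by (rule degree_span_power[OF pos])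
    then show ?thesis using True by (simp add: power_int_def)
  next
    case False
    have "inverse (X (\<ee> i)) ^ nat (- a) \<in> degree_span i (\<lambda>z. z = int (nat (- a)) * -1)"
      by (rule degree_span_power[OF neg])
    then show ?thesis using False by (simp add: power_int_def)
  qed
qed

lemma subring_gen_gens_without_subset_exchange_ring: "subring_gen (gens_without i) \<subseteq> exchange_ring i"
  unfolding exchange_ring_def by (rule subring_gen_mono) blast

lemma X_mem_exchange_ring: "X (\<ee> i) \<in> exchange_ring i"
  and mutated_var_mem_exchange_ring: "X' \<in> exchange_ring i"
  unfolding exchange_ring_def by (auto intro: subring_gen.gen)

lemma sum_nonneg_powers_mem_exchange_ring:
  assumes "Y \<in> exchange_ring i" "\<And>b. b \<in> F \<Longrightarrow> 0 \<le> b \<and> c b \<in> subring_gen (gens_without i)"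
  shows "(\<Sum>b\<in>F. c b * Y powi b) \<in> exchange_ring i"
  using assms subring_gen_gens_without_subset_exchange_ring unfolding exchange_ring_def
  by (intro subring_gen_sum_nonneg_powers) auto

lemma degree_bounded_in_exchange_ring:
  assumes z: "z \<in> L_ring m n t X"
    and deg: "z * X' ^ N \<in> degree_span i (\<lambda>k. 1 - int N \<le> k)"
  shows "z \<in> exchange_ring i"
proof -
  let ?R = "subring_gen (gens_without i)"
  interpret normalized_subring ?R "X (\<ee> i)"
    using X_commute[OF _ lattice_unitvec[OF i_mem]]
    by (intro normalized_subring_gens_without X_nonzero lattice_unitvec i_mem) blast
  have "z \<in> laurent_span ?R (X (\<ee> i))"
    using z subring_gen_adjoin_subset_laurent_span[of "gens_without i"]
    unfolding L_ring_eq by (auto intro: subring_gen.gen)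
  then obtain G e where z_eq: "z = (\<Sum>a\<in>G. e a * X (\<ee> i) powi a)" and G: "finite G"
    and e: "\<And>a. a \<in> G \<Longrightarrow> e a \<in> ?R"
    unfolding laurent_span_def by blast
  define zp where "zp = (\<Sum>a\<in>G \<inter> {a. 0 < a}. e a * X (\<ee> i) powi a)"
  define zm where "zm = (\<Sum>a\<in>G - {a. 0 < a}. e a * X (\<ee> i) powi a)"
  have "z = zp + zm" unfolding z_eq zp_def zm_def by (rule sum.Int_Diff[OF G])
  have summand: "e a * X (\<ee> i) powi a * X' ^ N \<in> degree_span i (\<lambda>k. k = a - int N)"
    if "a \<in> G" for a
  proof -
    have "e a \<in> degree_span i (\<lambda>k. k = 0)"
      using e[OF that] subring_gen_gens_without_degree_zero by blast
    then have "e a * X (\<ee> i) powi a \<in> degree_span i (\<lambda>k. k = a)"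
      by (rule degree_span_mult[OF _ X_unitvec_power_int_degree]) simp
    moreover have "X' ^ N \<in> degree_span i (\<lambda>k. k = int N * -1)"
      by (rule degree_span_power[OF mutated_var_degree])
    ultimately show ?thesis by (rule degree_span_mult) simp
  qed
  have "zm * X' ^ N \<in> degree_span i (\<lambda>k. k \<le> - int N)"
    unfolding zm_def sum_distrib_right
    by (rule degree_span_sum, rule degree_span_mono[OF summand]) auto
  moreover have "zp * X' ^ N \<in> degree_span i (\<lambda>k. 1 - int N \<le> k)"
    unfolding zp_def sum_distrib_right
    by (rule degree_span_sum, rule degree_span_mono[OF summand]) auto
  then have "z * X' ^ N - zp * X' ^ N \<in> degree_span i (\<lambda>k. 1 - int N \<le> k)"
    by (rule degree_span_diff[OF deg])
  then have "zm * X' ^ N \<in> degree_span i (\<lambda>k. 1 - int N \<le> k)"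
    using \<open>z = zp + zm\<close> by (simp add: distrib_right)
  ultimately have "zm * X' ^ N = 0"
    by (rule degree_span_disjoint) auto
  then have "z = zp"
    using \<open>z = zp + zm\<close> mutated_var_nonzero by simp
  also have "zp \<in> exchange_ring i"
    unfolding zp_def using e by (intro sum_nonneg_powers_mem_exchange_ring X_mem_exchange_ring) auto
  finally show ?thesis .
qed

lemma negative_laurent_degree_bound:
  assumes "\<And>b. b \<in> F \<Longrightarrow> c b \<in> subring_gen (gens_without i) \<and> - int N \<le> b \<and> b < 0"
  shows "(\<Sum>b\<in>F. c b * X' powi b) * X' ^ N \<in> degree_span i (\<lambda>k. 1 - int N \<le> k)"
  unfolding sum_distrib_right
proof (rule degree_span_sum)
  fix b assume b: "b \<in> F"
  have "X' powi b * X' ^ N = X' powi (b + int N)"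
    using mutated_var_nonzero by (simp add: power_int_add)
  also have "\<dots> = X' ^ nat (b + int N)"
    using assms[OF b] by (simp add: power_int_def)
  finally have "c b * X' powi b * X' ^ N = c b * X' ^ nat (b + int N)"
    by (simp add: mult.assoc)
  moreover have "c b * X' ^ nat (b + int N) \<in> degree_span i (\<lambda>k. 1 - int N \<le> k)"
  proof (rule degree_span_mult)
    show "c b \<in> degree_span i (\<lambda>k. k = 0)"
      using assms[OF b] subring_gen_gens_without_degree_zero by blast
    show "X' ^ nat (b + int N) \<in> degree_span i (\<lambda>k. k = int (nat (b + int N)) * -1)"
      by (rule degree_span_power[OF mutated_var_degree])
  qed (use assms[OF b] in auto)
  ultimately show "c b * X' powi b * X' ^ N \<in> degree_span i (\<lambda>k. 1 - int N \<le> k)"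
    by simp
qed

lemma L_ring_inter_L_mut_ring_subset_exchange_ring:
  assumes y: "y \<in> L_ring m n t X" "y \<in> L_mut_ring m n t X h d B i"
  shows "y \<in> exchange_ring i"
proof -
  let ?R = "subring_gen (gens_without i)"
  interpret normalized_subring ?R X'
    using mutated_var_quasi_commute
    by (intro normalized_subring_gens_without mutated_var_nonzero) blast
  have "y \<in> laurent_span ?R X'"
    using y(2) subring_gen_adjoin_subset_laurent_span[of "gens_without i"]
    unfolding L_mut_ring_eq by (auto intro: subring_gen.gen)
  then obtain F c where y_eq: "y = (\<Sum>b\<in>F. c b * X' powi b)" and F: "finite F"
    and c: "\<And>b. b \<in> F \<Longrightarrow> c b \<in> ?R"
    unfolding laurent_span_def by blast
  define p where "p = (\<Sum>b\<in>F \<inter> {b. 0 \<le> b}. c b * X' powi b)"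
  define z where "z = (\<Sum>b\<in>F - {b. 0 \<le> b}. c b * X' powi b)"
  define N where "N = (\<Sum>b\<in>F. nat \<bar>b\<bar>)"
  have "y = p + z" unfolding y_eq p_def z_def by (rule sum.Int_Diff[OF F])
  have p: "p \<in> exchange_ring i"
    unfolding p_def using c by (intro sum_nonneg_powers_mem_exchange_ring mutated_var_mem_exchange_ring) auto
  have "z = y - p" using \<open>y = p + z\<close> by simp
  then have "z \<in> L_ring m n t X"
    using y(1) p exchange_ring_subset_L_ring unfolding L_ring_def by (auto intro: subring_gen.diff)
  moreover have "nat \<bar>b\<bar> \<le> N" if "b \<in> F" for b
    unfolding N_def using F that by (intro member_le_sum) auto
  then have "z * X' ^ N \<in> degree_span i (\<lambda>k. 1 - int N \<le> k)"
    unfolding z_def using c by (intro negative_laurent_degree_bound) force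
  ultimately have "z \<in> exchange_ring i"
    by (rule degree_bounded_in_exchange_ring)
  then show ?thesis
    using p \<open>y = p + z\<close> unfolding exchange_ring_def by (simp add: subring_gen_add)
qed

end

end

theorem proposition4p2:
  fixes m n :: nat and t :: "'f::division_ring" and X :: "(nat \<Rightarrow> int) \<Rightarrow> 'f"
    and h :: "nat \<Rightarrow> nat \<Rightarrow> 'f" and d :: "nat \<Rightarrow> nat"
    and L B :: "nat \<Rightarrow> nat \<Rightarrow> int"
  assumes "quantum_seed m n t X h d L B"
  shows "upper_bound m n t X h d B =
    (\<Inter>i\<in>{1..n}. subring_gen (ZP_gens m n t X \<union>
        (\<Union>k\<in>{1..n} - {i}. {X (\<ee> k), inverse (X (\<ee> k))}) \<union>
        {X (\<ee> i), mutated_var m X h d B i}))"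
proof -
  interpret quantum_seed_setting m n t X h d L B
    by (rule quantum_seed_setting.intro) (rule assms)
  have "subring_gen (ZP_gens m n t X \<union> (\<Union>k\<in>{1..n} - {i}. {X (\<ee> k), inverse (X (\<ee> k))}) \<union>
      {X (\<ee> i), mutated_var m X h d B i}) = exchange_ring i" for i
    by (simp add: exchange_ring_def gens_without_def)
  moreover have "upper_bound m n t X h d B = (\<Inter>i\<in>{1..n}. exchange_ring i)"
  proof
    show "upper_bound m n t X h d B \<subseteq> (\<Inter>i\<in>{1..n}. exchange_ring i)"
      unfolding upper_bound_def using L_ring_inter_L_mut_ring_subset_exchange_ring by blast
    have "1 \<in> {1..n}" using one_le_n by simp
    then show "(\<Inter>i\<in>{1..n}. exchange_ring i) \<subseteq> upper_bound m n t X h d B"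
      unfolding upper_bound_def
      using exchange_ring_subset_L_ring exchange_ring_subset_L_mut_ring by blast
  qed
  ultimately show ?thesis by simp
qed

end
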